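(* Let $n\ge 2$ and let $H(t)$, $0\le t\le T$, be a piecewise-continuous time-dependent Hermitian Hamiltonian on $n$ qubits that is U(1)-invariant at all times. Then $$\Delta_3=-\frac{4}{2^n}\sum_{\substack{1\le l\le n\\ l\ \text{odd}}}(l-1)\int_0^T \mathrm{Tr}[H(t)C_l]\,dt \pmod{2\pi}.$$
   Context: Qubits $1,\dots,n$, Hilbert space $(\mathbb{C}^2)^{\otimes n}$, $Z_j$ the Pauli $Z$ on qubit $j$. For $m=0,\dots,n$, $\Pi_m$ is the projector onto the span of computational basis states with exactly $m$ qubits in state $|1\rangle$ (the eigenspace of $\sum_j (I-Z_j)/2$ with eigenvalue $m$). A Hamiltonian is U(1)-invariant if it commutes with $\sum_j Z_j$. For such $H(t)$, $V=\mathcal{T}\exp(-i\int_0^T H(t)dt)$ (time-ordered exponential) satisfies $V=\bigoplus_{m=0}^n V_m$ with $V_m$ the restriction of $V$ to the range of $\Pi_m$; define $\theta_m=\arg\det(V_m)\in(-\pi,\pi]$ and $$\Delta_3=\theta_{n-1}-\theta_1-(n-2)(\theta_n-\theta_0)\pmod{2\pi}.$$ Define $C_0=I$ and for $l=1,\dots,n$, $C_l=\sum_{i_1<i_2<\cdots<i_l} Z_{i_1}Z_{i_2}\cdots Z_{i_l}$. *)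

theory Defs
  imports "HOL-Analysis.Analysis"
begin

text \<open>Qubits are the elements of a finite type 'q (so n = CARD('q)).
  Computational basis states are functions x :: 'q \<Rightarrow> bool, where x j = True
  means qubit j is in state |1>.\<close>

type_synonym ('q) op = "complex ^ ('q \<Rightarrow> bool) ^ ('q \<Rightarrow> bool)"

definition weight :: "('q::finite \<Rightarrow> bool) \<Rightarrow> nat" where
  "weight x = card {j. x j}"

definition Zop :: "'q::finite \<Rightarrow> 'q op" where
  "Zop j = (\<chi> x y. if x = y then (if x j then -1 else 1) else 0)"

text \<open>Sum over products Z_{i_1}...Z_{i_l} over all l-element sets of qubits;
  the product of the commuting diagonal matrices Z_i (i in S) is the diagonal
  matrix with entries prod_{i in S} (+-1).\<close>
definition Cl :: "nat \<Rightarrow> 'q::finite op" where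
  "Cl l = (\<Sum>S\<in>{S::'q set. card S = l}.
            (\<chi> x y. if x = y then (\<Prod>j\<in>S. if x j then -1 else 1) else 0))"

definition hermitian_op :: "'q::finite op \<Rightarrow> bool" where
  "hermitian_op A \<longleftrightarrow> (\<forall>x y. A $ x $ y = cnj (A $ y $ x))"

definition u1_invariant :: "'q::finite op \<Rightarrow> bool" where
  "u1_invariant A \<longleftrightarrow> A ** (\<Sum>j\<in>UNIV. Zop j) = (\<Sum>j\<in>UNIV. Zop j) ** A"

definition piecewise_continuous_on :: "real \<Rightarrow> (real \<Rightarrow> 'a::topological_space) \<Rightarrow> bool" where
  "piecewise_continuous_on T H \<longleftrightarrow>
     (\<exists>S. finite S \<and> S \<subseteq> {0..T} \<and> 0 \<in> S \<and> T \<in> S \<and>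
        (\<forall>a\<in>S. \<forall>b\<in>S. a < b \<and> {a<..<b} \<inter> S = {} \<longrightarrow>
           (\<exists>g. continuous_on {a..b} g \<and> (\<forall>t\<in>{a<..<b}. H t = g t))))"

text \<open>V is the time-ordered exponential of -i H on [0,T]: the continuous solution of
  V' = -i H V with V(0) = I (derivative required off a finite set, as H is only
  piecewise continuous).  The evolution operator is V T.\<close>
definition time_ordered_exp :: "real \<Rightarrow> (real \<Rightarrow> 'q::finite op) \<Rightarrow> (real \<Rightarrow> 'q op) \<Rightarrow> bool" where
  "time_ordered_exp T H V \<longleftrightarrow>
     V 0 = mat 1 \<and> continuous_on {0..T} V \<and>
     (\<exists>F. finite F \<and> (\<forall>t\<in>{0..T} - F.
        (V has_vector_derivative (mat (- \<i>) ** H t ** V t)) (at t within {0..T})))"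

text \<open>Determinant of the restriction of A to the span of basis states in S
  (Leibniz formula, as in the library definition of det).\<close>
definition det_on :: "('q::finite \<Rightarrow> bool) set \<Rightarrow> 'q op \<Rightarrow> complex" where
  "det_on S A = (\<Sum>p\<in>{p. p permutes S}. of_int (sign p) * (\<Prod>i\<in>S. A $ i $ p i))"

text \<open>theta_m = arg det(V_m) in (-pi, pi] (Arg has range (-pi,pi]).\<close>
definition theta :: "'q::finite op \<Rightarrow> nat \<Rightarrow> real" where
  "theta V m = Arg (det_on {x. weight x = m} V)"

end

theory Submission
  imports Defs "HOL-Computational_Algebra.Polynomial"
begin

text \<open>
  The diagonal entry of \<open>C\<^sub>l\<close> at a basis state of weight \<open>w\<close> is the coefficient of \<open>z\<^sup>l\<close> in
  the Krawtchouk generating polynomial \<open>P(z) = (1 - z)\<^sup>w (1 + z)\<^sup>n\<^sup>-\<^sup>w\<close>, and for every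
  polynomial \<open>\<Sum>\<^sub>l odd (l - 1) a\<^sub>l = (P'(1) + P'(-1) - P(1) + P(-1)) / 2\<close>. Evaluating at
  \<open>z = \<plusminus>1\<close> shows that \<open>\<Sum>\<^sub>l odd (l - 1) C\<^sub>l\<close> is \<open>2\<^sup>n/4\<close> times the diagonal operator whose
  entry at weight \<open>w\<close> is the coefficient of \<open>\<theta>\<^sub>w\<close> in \<open>\<Delta>\<^sub>3\<close>; so the right-hand side is
  \<open>\<Delta>\<^sub>3\<close> evaluated at the numbers \<open>-\<integral> Tr[H(t) \<Pi>\<^sub>m] dt\<close>.

  On the other hand U(1)-invariance makes \<open>H(t)\<close> block diagonal, so by Jacobi's formula
  \<open>D = det V\<^sub>m\<close> solves \<open>D' = -i Tr[H \<Pi>\<^sub>m] D\<close>, whence \<open>det V\<^sub>m = exp(-i \<integral> Tr[H \<Pi>\<^sub>m])\<close>. As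
  \<open>H\<close> is Hermitian the integral is real, so \<open>\<theta>\<^sub>m \<equiv> -\<integral> Tr[H \<Pi>\<^sub>m] (mod 2\<pi>)\<close>.
\<close>

definition delta3 :: "(nat \<Rightarrow> 'a::comm_ring_1) \<Rightarrow> nat \<Rightarrow> 'a" where
  "delta3 f n = f (n - 1) - f 1 - (of_nat n - 2) * (f n - f 0)"

lemma delta3_sum: "(\<Sum>x\<in>X. delta3 (f x) n) = delta3 (\<lambda>m. \<Sum>x\<in>X. f x m) n"
  by (simp add: delta3_def sum_subtractf flip: sum_distrib_left)

lemma mult_delta3: "c * delta3 f n = delta3 (\<lambda>m. c * f m) n"
  by (simp add: delta3_def algebra_simps)

lemma integral_delta3:
  fixes f :: "nat \<Rightarrow> real \<Rightarrow> complex"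
  assumes "\<And>m. f m integrable_on S"
  shows "integral S (\<lambda>t. delta3 (\<lambda>m. f m t) n) = delta3 (\<lambda>m. integral S (f m)) n"
  by (simp add: delta3_def assms integral_diff integrable_diff integrable_on_mult_right)

lemma delta3_cong_mod_2pi:
  fixes f g :: "nat \<Rightarrow> real"
  assumes "\<And>m. \<exists>k::int. f m = g m + 2 * pi * of_int k"
  shows "\<exists>k::int. delta3 f n = delta3 g n + 2 * pi * of_int k"
proof -
  from assms obtain k :: "nat \<Rightarrow> int" where k: "\<And>m. f m = g m + 2 * pi * of_int (k m)"
    by metis
  have "delta3 f n = delta3 g n + 2 * pi * of_int (delta3 k n)"
    by (simp add: delta3_def k algebra_simps)
  then show ?thesis ..
qed

section \<open>Krawtchouk polynomials\<close>

lemma coeff_prod_linear_factors: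
  fixes c :: "'a \<Rightarrow> 'b::comm_ring_1"
  assumes "finite A"
  shows "coeff (\<Prod>j\<in>A. [:1, c j:]) l = (\<Sum>S\<in>{S. S \<subseteq> A \<and> card S = l}. prod c S)"
proof -
  have monom_prod: "(\<Prod>j\<in>X. monom (c j) 1) = monom (prod c X) (card X)" if "finite X" for X
    using that by (induction X rule: finite_induct) (auto simp: mult_monom monom_0 one_pCons)
  have "(\<Prod>j\<in>A. [:1, c j:]) = (\<Prod>j\<in>A. monom (c j) 1 + 1)"
    by (simp add: monom_Suc monom_0 one_pCons)
  also have "\<dots> = (\<Sum>X\<in>Pow A. (\<Prod>j\<in>X. monom (c j) 1) * (\<Prod>j\<in>A - X. 1))"
    by (rule prod_add) (rule assms)
  also have "\<dots> = (\<Sum>X\<in>Pow A. monom (prod c X) (card X))"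
    using assms by (intro sum.cong refl) (simp add: monom_prod[OF finite_subset] del: One_nat_def)
  finally have "coeff (\<Prod>j\<in>A. [:1, c j:]) l = (\<Sum>X\<in>Pow A. if card X = l then prod c X else 0)"
    by (simp add: coeff_sum)
  also have "\<dots> = (\<Sum>S\<in>{S. S \<subseteq> A \<and> card S = l}. prod c S)"
    using assms by (subst sum.inter_filter[symmetric]) (auto intro: sum.cong)
  finally show ?thesis .
qed

lemma poly_pderiv_eq_sum:
  fixes P :: "'a::{idom,ring_char_0} poly"
  assumes "degree P \<le> n"
  shows "poly (pderiv P) z = (\<Sum>l\<le>n. of_nat l * coeff P l * z ^ (l - 1))"
proof -
  have "poly (pderiv P) z = (\<Sum>i\<le>n. coeff (pderiv P) i * z ^ i)"
    using assms by (subst poly_as_sum_of_monoms'[symmetric, of "pderiv P" n])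
      (auto simp: degree_pderiv poly_sum poly_monom)
  also have "\<dots> = (\<Sum>l\<le>Suc n. of_nat l * coeff P l * z ^ (l - 1))"
    by (subst sum.atMost_Suc_shift) (simp add: coeff_pderiv)
  also have "\<dots> = (\<Sum>l\<le>n. of_nat l * coeff P l * z ^ (l - 1))"
    using assms by (simp add: coeff_eq_0)
  finally show ?thesis .
qed

lemma sum_odd_coeff_eq_poly_pderiv:
  fixes P :: "'a::field_char_0 poly"
  assumes "degree P \<le> n"
  shows "(\<Sum>l\<in>{l. 1 \<le> l \<and> l \<le> n \<and> odd l}. (of_nat l - 1) * coeff P l)
     = (poly (pderiv P) 1 + poly (pderiv P) (-1) - poly P 1 + poly P (-1)) / 2"
proof -
  have poly_P: "poly P z = (\<Sum>l\<le>n. coeff P l * z ^ l)" for z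
    using assms by (subst poly_as_sum_of_monoms'[symmetric, of P n]) (auto simp: poly_sum poly_monom)
  have summand: "(if 1 \<le> l \<and> odd l then (of_nat l - 1) * coeff P l else 0)
      = (of_nat l * coeff P l * 1 ^ (l - 1) + of_nat l * coeff P l * (-1) ^ (l - 1)
         - coeff P l * 1 ^ l + coeff P l * (-1) ^ l) / 2" for l
    by (cases l) (auto simp: field_simps)
  have "(\<Sum>l\<in>{l. 1 \<le> l \<and> l \<le> n \<and> odd l}. (of_nat l - 1) * coeff P l)
      = (\<Sum>l\<le>n. if 1 \<le> l \<and> odd l then (of_nat l - 1) * coeff P l else 0)"
    by (subst sum.inter_filter[symmetric]) (auto intro: sum.cong)
  also have "\<dots> = (poly (pderiv P) 1 + poly (pderiv P) (-1) - poly P 1 + poly P (-1)) / 2"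
    unfolding summand poly_P poly_pderiv_eq_sum[OF assms]
    by (simp only: sum.distrib[symmetric] sum_subtractf[symmetric] sum_divide_distrib[symmetric])
  finally show ?thesis .
qed

text \<open>The left-hand side collects \<open>(1 - z)\<^sup>a (1 + z)\<^sup>b\<close> and its derivative at \<open>z = \<plusminus>1\<close>;
  note that \<open>0 ^ 0 = 1\<close>.\<close>

lemma krawtchouk_endpoint_combination:
  fixes a b :: nat
  assumes "a + b = n" "n \<ge> 2"
  shows "((of_nat b * 0 ^ a * 2 ^ (b - 1) - of_nat a * 0 ^ (a - 1) * 2 ^ b)
        + (of_nat b * 2 ^ a * 0 ^ (b - 1) - of_nat a * 2 ^ (a - 1) * 0 ^ b)
        - 0 ^ a * 2 ^ b + 2 ^ a * 0 ^ b) / 2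
     = (2 ^ n / 4 :: 'a::field_char_0) * delta3 (\<lambda>m. of_bool (a = m)) n"
proof -
  consider "a = 0" | "a = 1" | "b = 0" | "b = 1" | "2 \<le> a" "2 \<le> b" by linarith
  then show ?thesis
  proof cases
    case 1
    with assms obtain k where "b = Suc (Suc k)" "n = Suc (Suc k)"
      by (metis add_0 add_2_eq_Suc le_iff_add)
    with 1 show ?thesis by (simp add: delta3_def field_simps)
  next
    case 2
    with assms obtain k where "b = Suc k" "n = Suc (Suc k)"
      by (metis Suc_1 add_le_cancel_left le_iff_add plus_1_eq_Suc)
    with 2 show ?thesis by (cases k) (simp_all add: delta3_def field_simps)
  next
    case 3
    with assms obtain k where "a = Suc (Suc k)" "n = Suc (Suc k)"
      by (metis add_0_right add_2_eq_Suc le_iff_add)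
    with 3 show ?thesis by (simp add: delta3_def field_simps)
  next
    case 4
    with assms obtain k where "a = Suc k" "n = Suc (Suc k)"
      by (metis Suc_1 add_le_cancel_right le_iff_add add.commute plus_1_eq_Suc)
    with 4 show ?thesis by (cases k) (simp_all add: delta3_def field_simps)
  next
    case 5
    with assms show ?thesis by (simp add: delta3_def power_0_left)
  qed
qed

lemma sum_odd_coeff_krawtchouk:
  fixes a b :: nat
  assumes "a + b = n" "n \<ge> 2"
  shows "(\<Sum>l\<in>{l. 1 \<le> l \<and> l \<le> n \<and> odd l}. (of_nat l - 1) * coeff ([:1, -1:] ^ a * [:1, 1:] ^ b) l)
     = (2 ^ n / 4 :: 'a::field_char_0) * delta3 (\<lambda>m. of_bool (a = m)) n"
proof -
  let ?P = "[:1, -1:] ^ a * [:1, 1:] ^ b :: 'a poly"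
  have "degree ?P \<le> degree ([:1, -1:] ^ a :: 'a poly) + degree ([:1, 1:] ^ b :: 'a poly)"
    by (rule degree_mult_le)
  also have "\<dots> \<le> a + b"
    using degree_power_le[of "[:1, -1::'a:]" a] degree_power_le[of "[:1, 1::'a:]" b] by simp
  finally have "(\<Sum>l\<in>{l. 1 \<le> l \<and> l \<le> n \<and> odd l}. (of_nat l - 1) * coeff ?P l)
      = (poly (pderiv ?P) 1 + poly (pderiv ?P) (-1) - poly ?P 1 + poly ?P (-1)) / 2"
    using assms(1) by (intro sum_odd_coeff_eq_poly_pderiv) simp
  also have "\<dots> = ((of_nat b * 0 ^ a * 2 ^ (b - 1) - of_nat a * 0 ^ (a - 1) * 2 ^ b)
        + (of_nat b * 2 ^ a * 0 ^ (b - 1) - of_nat a * 2 ^ (a - 1) * 0 ^ b)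
        - 0 ^ a * 2 ^ b + 2 ^ a * 0 ^ b) / 2"
    by (simp add: pderiv_mult pderiv_power pderiv_pCons)
  also have "\<dots> = 2 ^ n / 4 * delta3 (\<lambda>m. of_bool (a = m)) n"
    by (rule krawtchouk_endpoint_combination[OF assms])
  finally show ?thesis .
qed

text \<open>\<open>block_trace m A\<close> is \<open>Tr[A \<Pi>\<^sub>m]\<close>.\<close>

definition block_trace :: "nat \<Rightarrow> 'q::finite op \<Rightarrow> complex" where
  "block_trace m A = (\<Sum>x\<in>{x. weight x = m}. A $ x $ x)"

lemma weight_le_card: "weight (x :: 'q::finite \<Rightarrow> bool) \<le> CARD('q)"
  unfolding weight_def by (rule card_mono) auto

lemma prod_sign_linear_factors:
  fixes x :: "'q::finite \<Rightarrow> bool"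
  shows "(\<Prod>j\<in>UNIV. [:1, if x j then -1 else 1:])
    = [:1, -1:] ^ weight x * [:1, 1::'a::comm_ring_1:] ^ (CARD('q) - weight x)"
proof -
  have "(\<Prod>j\<in>UNIV. [:1, if x j then -1 else 1:])
      = (\<Prod>j\<in>UNIV \<inter> {j. x j}. [:1, -1::'a:]) * (\<Prod>j\<in>UNIV \<inter> - {j. x j}. [:1, 1:])"
    by (subst prod.If_cases[symmetric]) (auto intro: prod.cong)
  then show ?thesis
    by (simp add: weight_def Compl_eq_Diff_UNIV card_Diff_subset)
qed

lemma Cl_entry:
  "(Cl l :: 'q::finite op) $ x $ y
     = (if x = y then coeff ([:1, -1:] ^ weight x * [:1, 1:] ^ (CARD('q) - weight x)) l else 0)"
  by (auto simp: Cl_def coeff_prod_linear_factors prod_sign_linear_factors[symmetric])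

lemma sum_odd_trace_mult_Cl:
  fixes A :: "'q::finite op"
  assumes "CARD('q) \<ge> 2"
  shows "(\<Sum>l\<in>{l. 1 \<le> l \<and> l \<le> CARD('q) \<and> odd l}. (of_nat l - 1) * trace (A ** Cl l))
     = 2 ^ CARD('q) / 4 * delta3 (\<lambda>m. block_trace m A) CARD('q)"
proof -
  let ?L = "{l. 1 \<le> l \<and> l \<le> CARD('q) \<and> odd l}"
  let ?K = "\<lambda>x l. coeff ([:1, -1:] ^ weight x * [:1, 1:] ^ (CARD('q) - weight x)) l :: complex"
  have trace: "trace (A ** Cl l) = (\<Sum>x\<in>UNIV. A $ x $ x * ?K x l)" for l
    by (simp add: trace_def matrix_matrix_mult_def Cl_entry if_distrib cong: if_cong)
  have block: "(\<Sum>x\<in>UNIV. A $ x $ x * of_bool (weight x = m)) = block_trace m A" for m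
    by (simp add: block_trace_def sum.inter_filter[symmetric] if_distrib cong: if_cong)
  have "(\<Sum>l\<in>?L. (of_nat l - 1) * trace (A ** Cl l))
      = (\<Sum>x\<in>UNIV. A $ x $ x * (\<Sum>l\<in>?L. (of_nat l - 1) * ?K x l))"
    unfolding trace sum_distrib_left by (subst sum.swap) (simp add: ac_simps)
  also have "\<dots> = (\<Sum>x\<in>UNIV.
      A $ x $ x * (2 ^ CARD('q) / 4 * delta3 (\<lambda>m. of_bool (weight x = m)) CARD('q)))"
    by (rule sum.cong[OF refl], subst sum_odd_coeff_krawtchouk)
      (use assms weight_le_card[where 'q='q] in auto)
  also have "\<dots> = 2 ^ CARD('q) / 4 *
      (\<Sum>x\<in>UNIV. A $ x $ x * delta3 (\<lambda>m. of_bool (weight x = m)) CARD('q))"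
    by (simp add: sum_distrib_left ac_simps)
  also have "(\<Sum>x\<in>UNIV. A $ x $ x * delta3 (\<lambda>m. of_bool (weight x = m)) CARD('q))
      = delta3 (\<lambda>m. block_trace m A) CARD('q)"
    unfolding mult_delta3 delta3_sum block ..
  finally show ?thesis .
qed

lemma bounded_linear_op_entry: "bounded_linear (\<lambda>A :: 'q::finite op. A $ i $ j)"
  using bounded_linear_compose[OF bounded_linear_vec_nth bounded_linear_vec_nth] .

lemma bounded_linear_block_trace: "bounded_linear (block_trace m :: 'q::finite op \<Rightarrow> complex)"
  unfolding block_trace_def[abs_def] by (intro bounded_linear_sum bounded_linear_op_entry)

lemma bounded_linear_trace_mult: "bounded_linear (\<lambda>A :: 'q::finite op. trace (A ** B))"
proof -
  have "(\<lambda>A :: 'q op. trace (A ** B)) = (\<lambda>A. \<Sum>i\<in>UNIV. \<Sum>k\<in>UNIV. A $ i $ k * B $ k $ i)"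
    by (simp add: trace_def matrix_matrix_mult_def)
  then show ?thesis
    by (simp only:) (intro bounded_linear_sum bounded_linear_mult_const bounded_linear_op_entry)
qed

lemma integral_sum_odd_trace_mult_Cl:
  fixes H :: "real \<Rightarrow> 'q::finite op"
  assumes n: "CARD('q) \<ge> 2" and H: "H integrable_on S"
  shows "(\<Sum>l\<in>{l. 1 \<le> l \<and> l \<le> CARD('q) \<and> odd l}. (of_nat l - 1) * integral S (\<lambda>t. trace (H t ** Cl l)))
     = 2 ^ CARD('q) / 4 * delta3 (\<lambda>m. integral S (\<lambda>t. block_trace m (H t))) CARD('q)"
proof -
  let ?L = "{l. 1 \<le> l \<and> l \<le> CARD('q) \<and> odd l}"
  have "(\<Sum>l\<in>?L. (of_nat l - 1) * integral S (\<lambda>t. trace (H t ** Cl l)))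
      = integral S (\<lambda>t. \<Sum>l\<in>?L. (of_nat l - 1) * trace (H t ** Cl l))"
    using integrable_linear[OF H bounded_linear_trace_mult]
    by (subst integral_sum) (auto simp: o_def intro: integrable_on_mult_right)
  also have "\<dots> = integral S (\<lambda>t. 2 ^ CARD('q) / 4 * delta3 (\<lambda>m. block_trace m (H t)) CARD('q))"
    unfolding sum_odd_trace_mult_Cl[OF n] ..
  also have "\<dots> = 2 ^ CARD('q) / 4 * delta3 (\<lambda>m. integral S (\<lambda>t. block_trace m (H t))) CARD('q)"
    using integrable_linear[OF H bounded_linear_block_trace] by (simp add: integral_delta3 o_def)
  finally show ?thesis .
qed

section \<open>Determinants of the weight blocks\<close>

lemma sum_Zop_entry:
  "(\<Sum>j\<in>UNIV. Zop j :: 'q::finite op) $ x $ y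
     = (if x = y then of_nat CARD('q) - 2 * of_nat (weight x) else 0)"
proof -
  have "(\<Sum>j\<in>UNIV. Zop j :: 'q op) $ x $ y = (if x = y then (\<Sum>j\<in>UNIV. if x j then -1 else 1) else 0)"
    by (simp add: Zop_def)
  also have "(\<Sum>j\<in>UNIV. if x j then -1 else 1 :: complex)
      = (\<Sum>j\<in>UNIV \<inter> {j. x j}. -1) + (\<Sum>j\<in>UNIV \<inter> - {j. x j}. 1)"
    by (rule sum.If_cases) simp
  also have "\<dots> = of_nat CARD('q) - 2 * of_nat (weight x)"
    by (simp add: weight_def Compl_eq_Diff_UNIV card_Diff_subset of_nat_diff card_mono)
  finally show ?thesis .
qed

lemma u1_invariant_block_diagonal:
  fixes A :: "'q::finite op"
  assumes "u1_invariant A" and "weight x \<noteq> weight y"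
  shows "A $ x $ y = 0"
proof -
  let ?z = "\<lambda>x. of_nat CARD('q) - 2 * of_nat (weight x) :: complex"
  have right: "(A ** (\<Sum>j\<in>UNIV. Zop j)) $ x $ y = A $ x $ y * ?z y"
    unfolding matrix_matrix_mult_def vec_lambda_beta sum_Zop_entry by (simp add: if_distrib cong: if_cong)
  have left: "((\<Sum>j\<in>UNIV. Zop j) ** A) $ x $ y = ?z x * A $ x $ y"
    unfolding matrix_matrix_mult_def vec_lambda_beta sum_Zop_entry
    by (simp add: if_distrib[where f = "\<lambda>c. c * A $ k $ y" for k] cong: if_cong)
  have "A $ x $ y * ?z y = ?z x * A $ x $ y"
    by (metis right left assms(1) u1_invariant_def)
  then have "A $ x $ y * (of_nat (weight x) - of_nat (weight y)) = 0"
    by (simp add: algebra_simps)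
  with assms(2) show ?thesis
    by simp
qed

lemma det_on_mat_1: "det_on S (mat 1 :: 'q::finite op) = 1"
proof -
  have "of_int (sign p) * (\<Prod>i\<in>S. (mat 1 :: 'q op) $ i $ p i) = (if p = id then 1 else 0)"
    if "p permutes S" for p
  proof (cases "p = id")
    case False
    then obtain i where "p i \<noteq> i" by (metis eq_id_iff)
    with that have "i \<in> S" by (auto simp: permutes_def)
    with \<open>p i \<noteq> i\<close> have "(\<Prod>i\<in>S. (mat 1 :: 'q op) $ i $ p i) = 0"
      by (intro prod_zero) (auto simp: mat_def)
    with False show ?thesis by simp
  qed (simp add: mat_def)
  then have "det_on S (mat 1 :: 'q op) = (\<Sum>p\<in>{p. p permutes S}. if p = id then 1 else 0)"
    unfolding det_on_def by (intro sum.cong) auto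
  also have "\<dots> = 1"
    using permutes_id[of S] by simp
  finally show ?thesis .
qed

lemma det_on_replace_row_eq_0:
  fixes A :: "'q::finite op"
  assumes i: "i \<in> S" and k: "k \<in> S" and ik: "i \<noteq> k"
  shows "(\<Sum>p\<in>{p. p permutes S}. of_int (sign p) * (A $ k $ p i * (\<Prod>j\<in>S - {i}. A $ j $ p j))) = 0"
proof -
  define f where "f p = of_int (sign p) * (A $ k $ p i * (\<Prod>j\<in>S - {i}. A $ j $ p j))" for p
  let ?t = "Transposition.transpose i k"
  have t: "?t permutes S"
    using i k by (rule permutes_swap_id)
  have f_swap: "f (p \<circ> ?t) = - f p" if p: "p permutes S" for p
    \<comment> \<open>rows \<open>i\<close> and \<open>k\<close> of the modified matrix coincide\<close>
  proof -
    have "permutation p" "permutation ?t"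
      using p t by (auto simp: permutation_permutes)
    then have sign: "sign (p \<circ> ?t) = - sign p"
      using ik by (simp add: sign_compose sign_swap_id)
    have k': "k \<in> S - {i}"
      using k ik by simp
    have "(\<Prod>j\<in>S - {i}. A $ j $ (p \<circ> ?t) j) = A $ k $ p i * (\<Prod>j\<in>S - {i} - {k}. A $ j $ p j)"
      using prod.remove[OF _ k', of "\<lambda>j. A $ j $ (p \<circ> ?t) j"] by (simp add: transpose_def)
    moreover have "(\<Prod>j\<in>S - {i}. A $ j $ p j) = A $ k $ p k * (\<Prod>j\<in>S - {i} - {k}. A $ j $ p j)"
      using prod.remove[OF _ k', of "\<lambda>j. A $ j $ p j"] by simp
    ultimately show ?thesis
      unfolding f_def sign by (simp add: transpose_def algebra_simps)
  qed
  have "(\<Sum>p\<in>{p. p permutes S}. f p) = (\<Sum>p\<in>{p. p permutes S}. f (p \<circ> ?t))"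
    by (rule sum.reindex_bij_witness[where i = "\<lambda>p. p \<circ> ?t" and j = "\<lambda>p. p \<circ> ?t"])
       (auto simp: o_assoc[symmetric] permutes_compose[OF t])
  also have "\<dots> = - (\<Sum>p\<in>{p. p permutes S}. f p)"
    by (simp add: f_swap sum_negf)
  finally show ?thesis
    unfolding f_def by simp
qed

text \<open>Jacobi's formula on the Leibniz expansion: the left-hand side is the derivative of
  \<open>det_on S\<close> along \<open>M' = A ** M\<close>. The block condition lets \<open>A ** M\<close> mix only rows in \<open>S\<close>.\<close>

lemma jacobi_sum_det_on:
  fixes A M :: "'q::finite op"
  assumes block: "\<And>i k. i \<in> S \<Longrightarrow> k \<notin> S \<Longrightarrow> A $ i $ k = 0"
  shows "(\<Sum>p\<in>{p. p permutes S}. of_int (sign p) *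
            (\<Sum>i\<in>S. (A ** M) $ i $ p i * (\<Prod>j\<in>S - {i}. M $ j $ p j)))
       = (\<Sum>i\<in>S. A $ i $ i) * det_on S M"
proof -
  let ?R = "\<lambda>i k. \<Sum>p\<in>{p. p permutes S}. of_int (sign p) * (M $ k $ p i * (\<Prod>j\<in>S - {i}. M $ j $ p j))"
  have row: "(A ** M) $ i $ c = (\<Sum>k\<in>S. A $ i $ k * M $ k $ c)" if "i \<in> S" for i c
    unfolding matrix_matrix_mult_def vec_lambda_beta
    by (rule sum.mono_neutral_right) (use block that in auto)
  have "(\<Sum>p\<in>{p. p permutes S}. of_int (sign p) *
            (\<Sum>i\<in>S. (A ** M) $ i $ p i * (\<Prod>j\<in>S - {i}. M $ j $ p j)))
      = (\<Sum>p\<in>{p. p permutes S}. \<Sum>i\<in>S. \<Sum>k\<in>S.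
           A $ i $ k * (of_int (sign p) * (M $ k $ p i * (\<Prod>j\<in>S - {i}. M $ j $ p j))))"
    by (intro sum.cong refl) (simp add: row sum_distrib_left sum_distrib_right algebra_simps)
  also have "\<dots> = (\<Sum>i\<in>S. \<Sum>k\<in>S. A $ i $ k * ?R i k)"
    by (simp add: sum_distrib_left sum.swap[of _ "{p. p permutes S}"])
  also have "\<dots> = (\<Sum>i\<in>S. \<Sum>k\<in>S. if k = i then A $ i $ i * det_on S M else 0)"
  proof (intro sum.cong refl)
    fix i k assume "i \<in> S" "k \<in> S"
    then show "A $ i $ k * ?R i k = (if k = i then A $ i $ i * det_on S M else 0)"
      using det_on_replace_row_eq_0[of i S k M] by (auto simp: det_on_def prod.remove)
  qed
  also have "\<dots> = (\<Sum>i\<in>S. A $ i $ i) * det_on S M"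
    by (simp add: sum_distrib_right)
  finally show ?thesis .
qed

lemma det_on_has_vector_derivative:
  fixes M :: "real \<Rightarrow> 'q::finite op" and A :: "'q op"
  assumes M: "(M has_vector_derivative (A ** M t)) (at t within U)"
    and block: "\<And>i k. i \<in> S \<Longrightarrow> k \<notin> S \<Longrightarrow> A $ i $ k = 0"
  shows "((\<lambda>s. det_on S (M s)) has_vector_derivative (\<Sum>i\<in>S. A $ i $ i) * det_on S (M t)) (at t within U)"
proof -
  have entry: "((\<lambda>s. M s $ i $ j) has_derivative (\<lambda>h. h *\<^sub>R (A ** M t) $ i $ j)) (at t within U)" for i j
    using bounded_linear.has_vector_derivative[OF bounded_linear_op_entry M]
    unfolding has_vector_derivative_def .
  have "((\<lambda>s. det_on S (M s)) has_derivative (\<lambda>h. \<Sum>p\<in>{p. p permutes S}. of_int (sign p) *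
      (\<Sum>i\<in>S. h *\<^sub>R (A ** M t) $ i $ p i * (\<Prod>j\<in>S - {i}. M t $ j $ p j)))) (at t within U)"
    unfolding det_on_def by (intro has_derivative_sum has_derivative_mult_right has_derivative_prod entry)
  moreover have "(\<Sum>p\<in>{p. p permutes S}. of_int (sign p) *
      (\<Sum>i\<in>S. h *\<^sub>R (A ** M t) $ i $ p i * (\<Prod>j\<in>S - {i}. M t $ j $ p j)))
      = h *\<^sub>R ((\<Sum>i\<in>S. A $ i $ i) * det_on S (M t))" for h
  proof -
    have "(\<Sum>i\<in>S. A $ i $ i) * det_on S (M t) = (\<Sum>p\<in>{p. p permutes S}. of_int (sign p) *
      (\<Sum>i\<in>S. (A ** M t) $ i $ p i * (\<Prod>j\<in>S - {i}. M t $ j $ p j)))"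
      by (rule jacobi_sum_det_on[OF block, symmetric])
    then show ?thesis
      by (simp add: scaleR_conv_of_real sum_distrib_left algebra_simps)
  qed
  ultimately show ?thesis
    unfolding has_vector_derivative_def by simp
qed

lemma continuous_on_det_on:
  fixes M :: "real \<Rightarrow> 'q::finite op"
  assumes "continuous_on U M"
  shows "continuous_on U (\<lambda>t. det_on S (M t))"
proof -
  have entry: "continuous_on U (\<lambda>t. M t $ i $ j)" for i j
    using continuous_on_compose[OF assms linear_continuous_on[OF bounded_linear_op_entry]]
    by (simp add: o_def)
  show ?thesis
    unfolding det_on_def by (intro continuous_on_sum continuous_on_mult_left continuous_on_prod entry)
qed

section \<open>Piecewise continuous Hamiltonians\<close>

lemma finite_set_gap:
  fixes S :: "'a::linorder set"
  assumes "finite S" "a \<in> S" "b \<in> S" "a < t" "t < b" "t \<notin> S"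
  obtains c d where "c \<in> S" "d \<in> S" "c < t" "t < d" "{c<..<d} \<inter> S = {}"
proof
  let ?below = "{s\<in>S. s < t}" and ?above = "{s\<in>S. t < s}"
  have below: "finite ?below" "?below \<noteq> {}"
    using assms(1,2,4) by auto
  have above: "finite ?above" "?above \<noteq> {}"
    using assms(1,3,5) by auto
  show "Max ?below \<in> S" "Max ?below < t"
    using Max_in[OF below] by auto
  show "Min ?above \<in> S" "t < Min ?above"
    using Min_in[OF above] by auto
  show "{Max ?below<..<Min ?above} \<inter> S = {}"
  proof (rule equals0I)
    fix s assume s: "s \<in> {Max ?below<..<Min ?above} \<inter> S"
    then have "s \<noteq> t" using assms(6) by auto
    then consider "s < t" | "t < s" by (rule linorder_neqE)
    then show False
    proof cases
      case 1
      with s have "s \<le> Max ?below" by (intro Max_ge below(1)) auto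
      with s show False by (auto dest: leD)
    next
      case 2
      with s have "Min ?above \<le> s" by (intro Min_le above(1)) auto
      with s show False by (auto dest: leD)
    qed
  qed
qed

lemma piecewise_continuous_onE:
  assumes "piecewise_continuous_on T H"
  obtains S where "finite S" "0 \<in> S" "T \<in> S"
    "\<And>a b. a \<in> S \<Longrightarrow> b \<in> S \<Longrightarrow> a < b \<Longrightarrow> {a<..<b} \<inter> S = {} \<Longrightarrow>
       \<exists>g. continuous_on {a..b} g \<and> (\<forall>t\<in>{a<..<b}. H t = g t)"
  using assms unfolding piecewise_continuous_on_def by metis

lemma piecewise_continuous_on_integrable:
  fixes H :: "real \<Rightarrow> 'a::banach"
  assumes "piecewise_continuous_on T H" "0 \<le> T"
  shows "H integrable_on {0..T}"
proof -
  obtain S where S: "finite S" "0 \<in> S" "T \<in> S"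
     and piece: "\<And>a b. a \<in> S \<Longrightarrow> b \<in> S \<Longrightarrow> a < b \<Longrightarrow> {a<..<b} \<inter> S = {} \<Longrightarrow>
           \<exists>g. continuous_on {a..b} g \<and> (\<forall>t\<in>{a<..<b}. H t = g t)"
    using piecewise_continuous_onE[OF assms(1)] by metis
  have on_pieces: "H integrable_on {a..b}" if "a \<in> S" "b \<in> S" "a \<le> b" for a b
    using that
  proof (induction "card (S \<inter> {a<..<b})" arbitrary: a b rule: less_induct)
    case less
    show ?case
    proof (cases "S \<inter> {a<..<b} = {}")
      case True
      show ?thesis
      proof (cases "a = b")
        case False
        with less.prems True piece obtain g
          where g: "continuous_on {a..b} g" "\<forall>t\<in>{a<..<b}. H t = g t"
          by (metis inf_commute order_less_le)
        have "g integrable_on {a..b}"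
          using g(1) by (rule integrable_continuous_real)
        moreover have "H t = g t" if "t \<in> {a..b} - {a, b}" for t
          using g(2) that by auto
        ultimately show ?thesis
          by (intro integrable_spike_finite[of "{a, b}" _ H g]) auto
      qed (use integrable_on_refl[of H a] in simp)
    next
      case False
      then obtain c where c: "c \<in> S" "a < c" "c < b" by auto
      have "card (S \<inter> {a<..<c}) < card (S \<inter> {a<..<b})" "card (S \<inter> {c<..<b}) < card (S \<inter> {a<..<b})"
        using S(1) c by (auto intro!: psubset_card_mono)
      then have "H integrable_on {a..c}" "H integrable_on {c..b}"
        using less.hyps less.prems c by (simp_all add: less_imp_le)
      with c show ?thesis
        by (intro Henstock_Kurzweil_Integration.integrable_combine[of a c b H]) auto
    qed
  qed
  from on_pieces[OF S(2,3) assms(2)] show ?thesis .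
qed

lemma piecewise_continuous_on_isCont:
  fixes H :: "real \<Rightarrow> 'a::topological_space"
  assumes "piecewise_continuous_on T H"
  obtains K where "finite K" "\<And>t. t \<in> {0..T} - K \<Longrightarrow> isCont H t"
proof -
  obtain S where S: "finite S" "0 \<in> S" "T \<in> S"
     and piece: "\<And>a b. a \<in> S \<Longrightarrow> b \<in> S \<Longrightarrow> a < b \<Longrightarrow> {a<..<b} \<inter> S = {} \<Longrightarrow>
           \<exists>g. continuous_on {a..b} g \<and> (\<forall>t\<in>{a<..<b}. H t = g t)"
    using piecewise_continuous_onE[OF assms] by metis
  have "isCont H t" if t: "t \<in> {0..T} - S" for t
  proof -
    from t S(2,3) have "0 < t" "t < T"
      by (metis DiffE atLeastAtMost_iff order_le_less)+
    with S t obtain a b where ab: "a \<in> S" "b \<in> S" "a < t" "t < b" "{a<..<b} \<inter> S = {}"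
      using finite_set_gap[OF S(1,2,3)] by blast
    with piece obtain g where g: "continuous_on {a..b} g" "\<forall>s\<in>{a<..<b}. H s = g s"
      using order.strict_trans by blast
    have "isCont g t"
      using continuous_on_interior[OF g(1)] ab by simp
    moreover have "\<forall>\<^sub>F s in nhds t. H s = g s"
      using g(2) ab unfolding eventually_nhds by (intro exI[of _ "{a<..<b}"]) auto
    ultimately show ?thesis
      using isCont_cong by blast
  qed
  with S(1) that show ?thesis by blast
qed

section \<open>Evolution of the block determinants\<close>

lemma linear_ode_exp_integral:
  fixes D c :: "real \<Rightarrow> complex"
  assumes T: "0 \<le> T" and K: "finite K"
    and D_cont: "continuous_on {0..T} D" and D0: "D 0 = 1"
    and c_int: "c integrable_on {0..T}"
    and c_cont: "\<And>t. t \<in> {0<..<T} - K \<Longrightarrow> isCont c t"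
    and D_deriv: "\<And>t. t \<in> {0<..<T} - K \<Longrightarrow> (D has_vector_derivative c t * D t) (at t)"
  shows "D T = exp (integral {0..T} c)"
proof -
  define I where "I t = integral {0..t} c" for t
  define G where "G t = D t * exp (- I t)" for t
    \<comment> \<open>constant, as its derivative vanishes off a finite set\<close>
  have "continuous_on {0..T} I"
    unfolding I_def by (rule indefinite_integral_continuous_1[OF c_int])
  then have G_cont: "continuous_on {0..T} G"
    unfolding G_def by (intro continuous_intros D_cont)
  have G_deriv: "(G has_derivative (\<lambda>h. 0)) (at t within {0..T})"
    if t: "t \<in> {0..T} - (K \<union> {0, T})" for t
  proof -
    have t': "t \<in> {0<..<T} - K" and interior: "at t within {0..T} = at t"
      using t by (auto intro!: at_within_interior)
    have "(I has_vector_derivative c t) (at t within {0..T} - {})"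
      unfolding I_def using t c_cont[OF t']
      by (intro integral_has_vector_derivative_continuous_at[OF c_int])
        (auto intro: continuous_at_imp_continuous_at_within)
    then have "((\<lambda>s. exp (- I s)) has_vector_derivative (- c t) * exp (- I t)) (at t)"
      using field_vector_diff_chain_at[OF has_vector_derivative_minus DERIV_exp] interior
      by (simp add: o_def)
    from has_vector_derivative_mult[OF D_deriv[OF t'] this]
    have "(G has_vector_derivative 0) (at t)"
      unfolding G_def by (simp add: algebra_simps)
    then show ?thesis
      unfolding has_vector_derivative_def interior by simp
  qed
  have "G T = G 0"
    using K T
    by (intro has_derivative_zero_unique_strong_interval[where k = "K \<union> {0, T}", OF _ G_cont refl G_deriv])
      auto
  then have "D T * exp (- I T) = 1"
    by (simp add: G_def I_def D0)
  then show ?thesis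
    by (simp add: I_def exp_minus field_simps)
qed

lemma mat_matrix_mult_entry: "(mat c ** A :: 'q::finite op) $ i $ k = c * A $ i $ k"
  by (simp add: matrix_matrix_mult_def mat_def if_distrib[where f = "\<lambda>a. a * A $ j $ k" for j]
      cong: if_cong)

lemma det_on_time_ordered_exp:
  fixes H V :: "real \<Rightarrow> 'q::finite op"
  assumes T: "0 \<le> T" and pc: "piecewise_continuous_on T H"
    and u1: "\<forall>t\<in>{0..T}. u1_invariant (H t)" and V: "time_ordered_exp T H V"
  shows "det_on {x. weight x = m} (V T) = exp (- \<i> * integral {0..T} (\<lambda>t. block_trace m (H t)))"
proof -
  let ?B = "{x::'q \<Rightarrow> bool. weight x = m}" and ?c = "\<lambda>t. - \<i> * block_trace m (H t)"
  obtain K where K: "finite K" "\<And>t. t \<in> {0..T} - K \<Longrightarrow> isCont H t"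
    using piecewise_continuous_on_isCont[OF pc] by metis
  obtain F where V0: "V 0 = mat 1" and V_cont: "continuous_on {0..T} V" and F: "finite F"
    and V_deriv: "\<And>t. t \<in> {0..T} - F \<Longrightarrow>
      (V has_vector_derivative (mat (- \<i>) ** H t ** V t)) (at t within {0..T})"
    using V unfolding time_ordered_exp_def by blast
  have block_trace_int: "(\<lambda>t. block_trace m (H t)) integrable_on {0..T}"
    using integrable_linear[OF piecewise_continuous_on_integrable[OF pc T] bounded_linear_block_trace]
    by (simp add: o_def)
  have "det_on ?B (V T) = exp (integral {0..T} ?c)"
  proof (rule linear_ode_exp_integral[OF T, where K = "K \<union> F"])
    show "?c integrable_on {0..T}"
      using block_trace_int by (rule integrable_on_mult_right)
    show "isCont ?c t" if "t \<in> {0<..<T} - (K \<union> F)" for t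
      using isCont_o2[OF K(2) linear_continuous_at[OF bounded_linear_block_trace]] that
      by (auto intro: continuous_intros)
    show "((\<lambda>s. det_on ?B (V s)) has_vector_derivative ?c t * det_on ?B (V t)) (at t)"
      if t: "t \<in> {0<..<T} - (K \<union> F)" for t
    proof -
      have "(V has_vector_derivative (mat (- \<i>) ** H t ** V t)) (at t)"
        using V_deriv[of t] t at_within_interior[of t "{0..T}"] by auto
      moreover have "(mat (- \<i>) ** H t) $ i $ k = 0" if "i \<in> ?B" "k \<notin> ?B" for i k
        using u1_invariant_block_diagonal[of "H t" i k] u1 t that by (auto simp: mat_matrix_mult_entry)
      ultimately have "((\<lambda>s. det_on ?B (V s)) has_vector_derivative
          (\<Sum>i\<in>?B. (mat (- \<i>) ** H t) $ i $ i) * det_on ?B (V t)) (at t)"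
        by (rule det_on_has_vector_derivative)
      then show ?thesis
        by (simp add: mat_matrix_mult_entry block_trace_def sum_distrib_left)
    qed
  qed (use K F V0 V_cont in \<open>auto simp: det_on_mat_1 continuous_on_det_on\<close>)
  then show ?thesis
    by simp
qed

lemma theta_time_ordered_exp:
  fixes H V :: "real \<Rightarrow> 'q::finite op"
  assumes "0 \<le> T" "piecewise_continuous_on T H"
    and "\<forall>t\<in>{0..T}. u1_invariant (H t)" "time_ordered_exp T H V"
  shows "\<exists>k::int. theta (V T) m = - Re (integral {0..T} (\<lambda>t. block_trace m (H t))) + 2 * pi * of_int k"
proof -
  let ?z = "- \<i> * integral {0..T} (\<lambda>t. block_trace m (H t))"
  obtain k :: int where "Im ?z - of_int k * (2 * pi) = Arg (exp ?z)"
    using Arg_exp_diff_2pi by blast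
  then have "theta (V T) m = - Re (integral {0..T} (\<lambda>t. block_trace m (H t))) + 2 * pi * of_int (- k)"
    unfolding theta_def det_on_time_ordered_exp[OF assms] by (simp add: algebra_simps)
  then show ?thesis ..
qed

lemma Im_block_trace_hermitian:
  assumes "hermitian_op A"
  shows "Im (block_trace m A) = 0"
proof -
  have "Im (A $ x $ x) = - Im (A $ x $ x)" for x
    using arg_cong[OF assms[unfolded hermitian_op_def, rule_format, of x x], of Im] by simp
  then show ?thesis
    unfolding block_trace_def Im_sum by simp
qed

lemma Im_integral_eq_0:
  fixes f :: "real \<Rightarrow> complex"
  assumes "f integrable_on S" and "\<And>t. t \<in> S \<Longrightarrow> Im (f t) = 0"
  shows "Im (integral S f) = 0"
proof -
  have "((\<lambda>t. Im (f t)) has_integral Im (integral S f)) S"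
    using has_integral_Im[OF integrable_integral[OF assms(1)]] .
  moreover have "((\<lambda>t. Im (f t)) has_integral 0) S"
    using assms(2) by (intro has_integral_eq[OF _ has_integral_0]) auto
  ultimately show ?thesis
    by (rule has_integral_unique)
qed

theorem mainTheorem2:
  fixes H V :: "real \<Rightarrow> 'q::finite op" and T :: real
  defines "n \<equiv> CARD('q)"
  assumes n2: "n \<ge> 2"
    and T0: "0 \<le> T"
    and pc: "piecewise_continuous_on T H"
    and herm: "\<forall>t\<in>{0..T}. hermitian_op (H t)"
    and u1: "\<forall>t\<in>{0..T}. u1_invariant (H t)"
    and V: "time_ordered_exp T H V"
  shows "\<exists>k::int.
    complex_of_real
      (theta (V T) (n - 1) - theta (V T) 1
        - (real n - 2) * (theta (V T) n - theta (V T) 0) - 2 * pi * of_int k)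
    = - (4 / 2 ^ n) * (\<Sum>l\<in>{l. 1 \<le> l \<and> l \<le> n \<and> odd l}.
          (of_nat l - 1) * integral {0..T} (\<lambda>t. trace (H t ** Cl l)))"
proof -
  define I where "I m = integral {0..T} (\<lambda>t. block_trace m (H t))" for m
  have H_int: "H integrable_on {0..T}"
    by (rule piecewise_continuous_on_integrable[OF pc T0])
  have block_trace_int: "(\<lambda>t. block_trace m (H t)) integrable_on {0..T}" for m
    using integrable_linear[OF H_int bounded_linear_block_trace] by (simp add: o_def)
  have "Im (I m) = 0" for m
    unfolding I_def using herm by (intro Im_integral_eq_0[OF block_trace_int] Im_block_trace_hermitian) auto
  then have I_real: "of_real (Re (I m)) = I m" for m
    by (simp add: complex_eq_iff)
  have "\<exists>k::int. theta (V T) m = - Re (I m) + 2 * pi * of_int k" for m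
    unfolding I_def by (rule theta_time_ordered_exp[OF T0 pc u1 V])
  then obtain k :: int where k: "delta3 (theta (V T)) n = delta3 (\<lambda>m. - Re (I m)) n + 2 * pi * of_int k"
    using delta3_cong_mod_2pi[of "theta (V T)" "\<lambda>m. - Re (I m)"] by blast
  have "- (4 / 2 ^ n) * (\<Sum>l\<in>{l. 1 \<le> l \<and> l \<le> n \<and> odd l}.
      (of_nat l - 1) * integral {0..T} (\<lambda>t. trace (H t ** Cl l))) = - delta3 I n"
    unfolding n_def integral_sum_odd_trace_mult_Cl[OF n2[unfolded n_def] H_int] I_def by simp
  also have "\<dots> = complex_of_real (delta3 (\<lambda>m. - Re (I m)) n)"
    by (simp add: delta3_def I_real algebra_simps)
  also have "\<dots> = complex_of_real (delta3 (theta (V T)) n - 2 * pi * of_int k)"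
    using k by simp
  finally show ?thesis
    unfolding delta3_def by (intro exI[of _ k]) simp
qed

end
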